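(* Let $\mu$ be a doubling measure on $\mathbb{R}^d$, $\Omega\subset\mathbb{R}^d$ a domain, $r$ an admissible radius function in $\Omega$ satisfying $|r(x)-r(y)|\leq|x-y|$ for all $x,y\in\Omega$, and $u\in L^\infty(\Omega)$. There are constants $C>0$ and $0<\theta\leq 1$, depending only on $\mu$ and $d$, such that for all $x,y\in\Omega$, $$|Mu(x)-Mu(y)| \leq C\,\|u\|_\infty \Big(\frac{|x-y|}{r(x)}\Big)^{\theta}.$$
   Context: A doubling measure on $\mathbb{R}^d$ is a positive Borel measure $\mu$ such that $0<\mu(B)<\infty$ for every open ball $B$ and there is $D\geq1$ with $\mu(B(a,2s))\leq D\mu(B(a,s))$ for all $a$, $s>0$. A function $r:\Omega\to(0,+\infty)$ is an admissible radius function in $\Omega$ if $0<r(x)\leq\operatorname{dist}(x,\partial\Omega)$ for all $x\in\Omega$; $B_x=B(x,r(x))$ is the open ball. $Mu(x)=\frac{1}{\mu(B_x)}\int_{B_x}u\,d\mu$ for $x\in\Omega$. *)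

theory Defs
  imports "HOL-Analysis.Analysis" "HOL-Probability.Essential_Supremum"
begin

definition doubling_measure :: "'a::euclidean_space measure \<Rightarrow> bool" where
  "doubling_measure \<mu> \<longleftrightarrow>
     sets \<mu> = sets borel \<and>
     (\<forall>a s. s > 0 \<longrightarrow> 0 < emeasure \<mu> (ball a s) \<and> emeasure \<mu> (ball a s) < \<infinity>) \<and>
     (\<exists>D::real. D \<ge> 1 \<and> (\<forall>a s. s > 0 \<longrightarrow>
         emeasure \<mu> (ball a (2 * s)) \<le> ennreal D * emeasure \<mu> (ball a s)))"

definition domain :: "'a::euclidean_space set \<Rightarrow> bool" where
  "domain \<Omega> \<longleftrightarrow> open \<Omega> \<and> connected \<Omega> \<and> \<Omega> \<noteq> {}"

text \<open>Admissible radius function; dist(x, boundary) is taken to be +infinity when the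
  boundary is empty (i.e. the domain is the whole space).\<close>
definition admissible_radius :: "'a::euclidean_space set \<Rightarrow> ('a \<Rightarrow> real) \<Rightarrow> bool" where
  "admissible_radius \<Omega> r \<longleftrightarrow>
     (\<forall>x\<in>\<Omega>. 0 < r x \<and> (frontier \<Omega> \<noteq> {} \<longrightarrow> r x \<le> infdist x (frontier \<Omega>)))"

definition avg_op :: "'a::euclidean_space measure \<Rightarrow> ('a \<Rightarrow> real) \<Rightarrow> ('a \<Rightarrow> real) \<Rightarrow> 'a \<Rightarrow> real" where
  "avg_op \<mu> r u x = set_lebesgue_integral \<mu> (ball x (r x)) u / measure \<mu> (ball x (r x))"

definition Linf_on :: "'a::euclidean_space measure \<Rightarrow> 'a set \<Rightarrow> ('a \<Rightarrow> real) \<Rightarrow> bool" where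
  "Linf_on \<mu> \<Omega> u \<longleftrightarrow> u \<in> borel_measurable (restrict_space \<mu> \<Omega>) \<and>
     esssup (restrict_space \<mu> \<Omega>) (\<lambda>x. ereal \<bar>u x\<bar>) < \<infinity>"

definition Linf_norm :: "'a::euclidean_space measure \<Rightarrow> 'a set \<Rightarrow> ('a \<Rightarrow> real) \<Rightarrow> real" where
  "Linf_norm \<mu> \<Omega> u = real_of_ereal (esssup (restrict_space \<mu> \<Omega>) (\<lambda>x. ereal \<bar>u x\<bar>))"

end

theory Submission
  imports Defs
begin

text \<open>Cover the middle sphere of the strip B(a,R) - B(a,R-2t) by a Vitali family of disjoint
  balls of radius t/2: the balls lie in the inner half B(a,R-t) - B(a,R-2t), their eightfold
  enlargements cover the outer half B(a,R) - B(a,R-t), so by doubling the outer half has at most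
  D^3 times the measure of the inner one and carries at most the fraction eta = D^3/(D^3+1) of the
  strip. Doubling the width from t until it is comparable to R then gives
  mu(B(a,R) - B(a,R-t)) <= 2 (t/R)^theta mu(B(a,R)) with 2^-theta = eta.
  Since r is 1-Lipschitz, the symmetric difference of B_x and B_y lies in two such strips of width
  2|x-y|, and the averages of a function bounded by M over two balls differ by at most
  2 M times the measure of their symmetric difference divided by mu(B_x).\<close>

lemma abs_div_diff_le:
  fixes a b m n M \<delta> :: real
  assumes "0 < m" "0 < n" "\<bar>b\<bar> \<le> M * n" "\<bar>a - b\<bar> \<le> M * \<delta>" "\<bar>m - n\<bar> \<le> \<delta>" "0 \<le> M"
  shows "\<bar>a / m - b / n\<bar> \<le> 2 * M * \<delta> / m"
proof -
  have split: "a / m - b / n = (a - b) / m + b * (n - m) / (m * n)"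
    using assms by (simp add: field_simps)
  have "\<bar>b * (n - m)\<bar> \<le> (M * n) * \<delta>"
    unfolding abs_mult using assms by (intro mult_mono) (auto simp: abs_minus_commute)
  then have "\<bar>b * (n - m)\<bar> / (m * n) \<le> (M * n) * \<delta> / (m * n)"
    using assms by (intro divide_right_mono) auto
  then have "\<bar>b * (n - m) / (m * n)\<bar> \<le> (M * n) * \<delta> / (m * n)"
    using assms by (simp add: abs_divide)
  also have "\<dots> = M * \<delta> / m"
    using assms by (simp add: field_simps)
  finally have "\<bar>b * (n - m) / (m * n)\<bar> \<le> M * \<delta> / m" .
  moreover have "\<bar>(a - b) / m\<bar> \<le> M * \<delta> / m"
    using assms by (simp add: abs_divide divide_right_mono)
  moreover have "\<bar>a / m - b / n\<bar> \<le> \<bar>(a - b) / m\<bar> + \<bar>b * (n - m) / (m * n)\<bar>"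
    unfolding split by (rule abs_triangle_ineq)
  moreover have "2 * M * \<delta> / m = M * \<delta> / m + M * \<delta> / m"
    by simp
  ultimately show ?thesis
    by linarith
qed

lemma powr_mult_le_mult_powr:
  fixes c x \<theta> :: real
  assumes "1 \<le> c" "0 \<le> x" "0 < \<theta>" "\<theta> \<le> 1"
  shows "(c * x) powr \<theta> \<le> c * x powr \<theta>"
proof -
  have "c powr \<theta> \<le> c powr 1"
    using assms by (intro powr_mono) auto
  then show ?thesis
    using assms by (simp add: powr_mult mult_right_mono)
qed

lemma emeasure_UN_countable_le:
  assumes "countable I" "\<And>i. i \<in> I \<Longrightarrow> X i \<in> sets M"
  shows "emeasure M (\<Union>(X ` I)) \<le> (\<integral>\<^sup>+i. emeasure M (X i) \<partial>count_space I)"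
proof -
  have indicator_UN_le: "indicator (\<Union>(X ` I)) x \<le> (\<integral>\<^sup>+i. indicator (X i) x \<partial>count_space I)" for x
  proof (cases "x \<in> \<Union>(X ` I)")
    case True
    then obtain j where j: "j \<in> I" "x \<in> X j" by auto
    have "(1::ennreal) = (\<integral>\<^sup>+i. indicator {j} i \<partial>count_space I)"
      using j by (subst nn_integral_indicator) (auto simp: emeasure_count_space)
    also have "\<dots> \<le> (\<integral>\<^sup>+i. indicator (X i) x \<partial>count_space I)"
      using j by (intro nn_integral_mono) (auto simp: indicator_def)
    finally show ?thesis using True by simp
  qed simp
  have "emeasure M (\<Union>(X ` I)) = (\<integral>\<^sup>+x. indicator (\<Union>(X ` I)) x \<partial>M)"
    using assms by (intro nn_integral_indicator[symmetric] sets.countable_UN') auto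
  also have "\<dots> \<le> (\<integral>\<^sup>+x. (\<integral>\<^sup>+i. indicator (X i) x \<partial>count_space I) \<partial>M)"
    by (intro nn_integral_mono indicator_UN_le)
  also have "\<dots> = (\<integral>\<^sup>+i. (\<integral>\<^sup>+x. indicator (X i) x \<partial>M) \<partial>count_space I)"
    using assms by (intro nn_integral_count_space_nn_integral) auto
  also have "\<dots> = (\<integral>\<^sup>+i. emeasure M (X i) \<partial>count_space I)"
    using assms by (intro nn_integral_cong) auto
  finally show ?thesis .
qed

lemma
  fixes v :: "'a \<Rightarrow> real"
  assumes v: "v \<in> borel_measurable M" "AE z in M. \<bar>v z\<bar> \<le> B" "0 \<le> B"
    and S: "S \<in> sets M" "emeasure M S < \<infinity>"
  shows set_integrable_bounded: "set_integrable M S v"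
    and abs_set_integral_le: "\<bar>LINT z:S|M. v z\<bar> \<le> B * measure M S"
proof -
  have bound_integrable: "integrable M (\<lambda>z. B * indicator S z)"
    using S by (intro integrable_mult_right) auto
  have bound: "AE z in M. \<bar>indicator S z *\<^sub>R v z\<bar> \<le> B * indicator S z"
    using v(2) by eventually_elim (use v(3) in \<open>auto simp: indicator_def\<close>)
  show integrable: "set_integrable M S v"
    unfolding set_integrable_def
  proof (rule Bochner_Integration.integrable_bound[OF bound_integrable])
    show "(\<lambda>z. indicator S z *\<^sub>R v z) \<in> borel_measurable M"
      using v S by (intro borel_measurable_scaleR borel_measurable_indicator) auto
    show "AE z in M. norm (indicator S z *\<^sub>R v z) \<le> norm (B * indicator S z)"
      using bound by eventually_elim (use v(3) in \<open>auto simp: indicator_def\<close>)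
  qed
  have "\<bar>LINT z:S|M. v z\<bar> \<le> (\<integral>z. \<bar>indicator S z *\<^sub>R v z\<bar> \<partial>M)"
    using integral_norm_bound[of M "\<lambda>z. indicator S z *\<^sub>R v z"]
    by (simp add: set_lebesgue_integral_def)
  also have "\<dots> \<le> (\<integral>z. B * indicator S z \<partial>M)"
    using integrable bound_integrable bound unfolding set_integrable_def
    by (intro integral_mono_AE integrable_abs)
  also have "\<dots> = B * measure M S"
    using S by simp
  finally show "\<bar>LINT z:S|M. v z\<bar> \<le> B * measure M S" .
qed

lemma abs_set_integral_diff_le:
  fixes v :: "'a \<Rightarrow> real"
  assumes v: "v \<in> borel_measurable M" "AE z in M. \<bar>v z\<bar> \<le> B" "0 \<le> B"
    and S: "S \<in> sets M" "emeasure M S < \<infinity>" and T: "T \<in> sets M" "emeasure M T < \<infinity>"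
  shows "\<bar>(LINT z:S|M. v z) - (LINT z:T|M. v z)\<bar> \<le> B * measure M (sym_diff S T)"
proof -
  let ?E = "sym_diff S T"
  have "emeasure M ?E \<le> emeasure M (S \<union> T)"
    using S T by (intro emeasure_mono) auto
  also have "\<dots> \<le> emeasure M S + emeasure M T"
    using S T by (intro emeasure_subadditive)
  also have "\<dots> < \<infinity>"
    using S T by (simp add: ennreal_add_less_top)
  finally have E: "?E \<in> sets M" "emeasure M ?E < \<infinity>"
    using S T by auto
  have "(LINT z:S|M. v z) - (LINT z:T|M. v z) = (\<integral>z. indicator S z * v z - indicator T z * v z \<partial>M)"
    using set_integrable_bounded[OF v S] set_integrable_bounded[OF v T]
    unfolding set_lebesgue_integral_def set_integrable_def by simp
  also have "\<dots> = (LINT z:?E|M. (indicator S z - indicator T z) * v z)"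
    unfolding set_lebesgue_integral_def
    by (intro Bochner_Integration.integral_cong) (auto simp: indicator_def)
  also have "\<bar>\<dots>\<bar> \<le> B * measure M ?E"
  proof (rule abs_set_integral_le[OF _ _ v(3) E])
    show "(\<lambda>z. (indicator S z - indicator T z) * v z) \<in> borel_measurable M"
      using v S T by (intro borel_measurable_times borel_measurable_diff borel_measurable_indicator) auto
    show "AE z in M. \<bar>(indicator S z - indicator T z) * v z\<bar> \<le> B"
      using v(2) by eventually_elim (use v(3) in \<open>auto simp: indicator_def\<close>)
  qed
  finally show ?thesis .
qed

lemma abs_measure_diff_le_measure_sym_diff:
  assumes "S \<in> fmeasurable M" "T \<in> fmeasurable M"
  shows "\<bar>measure M S - measure M T\<bar> \<le> measure M (sym_diff S T)"
proof -
  have "measure M A \<le> measure M B + measure M (sym_diff A B)"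
    if "A \<in> fmeasurable M" "B \<in> fmeasurable M" for A B
  proof -
    have "measure M A \<le> measure M (B \<union> sym_diff A B)"
      using that by (intro measure_mono_fmeasurable) auto
    also have "\<dots> \<le> measure M B + measure M (sym_diff A B)"
      using that by (intro measure_Un_le) auto
    finally show ?thesis .
  qed
  from this[OF assms] this[OF assms(2,1)] show ?thesis
    by (simp add: Un_commute)
qed

text \<open>On a null space the essential supremum is \<open>-\<infinity>\<close>, which \<open>real_of_ereal\<close> maps to 0.\<close>

lemma Linf_norm_nonneg: "0 \<le> Linf_norm \<mu> \<Omega> u"
proof -
  let ?N = "restrict_space \<mu> \<Omega>" and ?f = "\<lambda>x. ereal \<bar>u x\<bar>"
  have "esssup ?N ?f = - \<infinity> \<or> 0 \<le> esssup ?N ?f"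
  proof (cases "?f \<in> borel_measurable ?N")
    case measurable: True
    show ?thesis
    proof (cases "emeasure ?N (space ?N) = 0")
      case True
      then show ?thesis using measurable esssup_zero_space by blast
    next
      case False
      then have "esssup ?N (\<lambda>x. 0) = (0::ereal)" by (rule esssup_const)
      moreover have "esssup ?N (\<lambda>x. 0::ereal) \<le> esssup ?N ?f"
        by (intro esssup_mono) auto
      ultimately show ?thesis by simp
    qed
  qed (simp add: esssup_non_measurable)
  then show ?thesis
    unfolding Linf_norm_def by (cases "esssup ?N ?f") auto
qed

lemma AE_abs_le_Linf_norm:
  assumes "Linf_on \<mu> \<Omega> u" "\<Omega> \<inter> space \<mu> \<in> sets \<mu>"
  shows "AE z in \<mu>. z \<in> \<Omega> \<longrightarrow> \<bar>u z\<bar> \<le> Linf_norm \<mu> \<Omega> u"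
proof -
  define E where "E = esssup (restrict_space \<mu> \<Omega>) (\<lambda>x. ereal \<bar>u x\<bar>)"
  have "E < \<infinity>"
    using assms(1) unfolding Linf_on_def E_def by simp
  have "AE z in restrict_space \<mu> \<Omega>. ereal \<bar>u z\<bar> \<le> E"
    unfolding E_def by (rule esssup_AE)
  then have "AE z in restrict_space \<mu> \<Omega>. \<bar>u z\<bar> \<le> Linf_norm \<mu> \<Omega> u"
    by eventually_elim (use \<open>E < \<infinity>\<close> in \<open>cases E, auto simp: Linf_norm_def E_def[symmetric]\<close>)
  then show ?thesis
    using AE_restrict_space_iff[OF assms(2)] by simp
qed

lemma ball_subset_if_admissible_radius:
  fixes \<Omega> :: "'a::euclidean_space set"
  assumes "admissible_radius \<Omega> r" "x \<in> \<Omega>"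
  shows "ball x (r x) \<subseteq> \<Omega>"
proof (cases "frontier \<Omega> = {}")
  case True
  then have "\<Omega> = UNIV"
    using assms(2) frontier_eq_empty[of \<Omega>] by blast
  then show ?thesis by simp
next
  case False
  then have rx: "r x \<le> infdist x (frontier \<Omega>)"
    using assms unfolding admissible_radius_def by auto
  show ?thesis
  proof (rule subsetI, rule ccontr)
    fix z assume z: "z \<in> ball x (r x)" "z \<notin> \<Omega>"
    have "closed_segment x z \<inter> frontier \<Omega> \<noteq> {}"
      using assms(2) z(2) by (intro connected_Int_frontier) auto
    then obtain w where w: "w \<in> closed_segment x z" "w \<in> frontier \<Omega>" by auto
    have "dist x w \<le> dist x z"
      using w(1) by (simp add: dist_commute dist_in_closed_segment)
    also have "\<dots> < r x" using z by simp
    also have "\<dots> \<le> infdist x (frontier \<Omega>)" by (rule rx)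
    also have "\<dots> \<le> dist x w" using w(2) by (rule infdist_le)
    finally show False by simp
  qed
qed

lemma sym_diff_balls_subset_strips:
  fixes x y :: "'a::metric_space"
  assumes "\<bar>rx - ry\<bar> \<le> dist x y"
  shows "sym_diff (ball x rx) (ball y ry)
    \<subseteq> (ball x rx - ball x (rx - 2 * dist x y)) \<union> (ball y ry - ball y (ry - 2 * dist x y))"
proof
  fix z assume "z \<in> sym_diff (ball x rx) (ball y ry)"
  moreover have "dist x z \<le> dist y z + dist x y" "dist y z \<le> dist x z + dist x y"
    using dist_triangle[of x z y] dist_triangle[of y z x] by (auto simp: dist_commute)
  ultimately show "z \<in> (ball x rx - ball x (rx - 2 * dist x y)) \<union> (ball y ry - ball y (ry - 2 * dist x y))"
    using assms by auto
qed

lemma radial_projection_to_sphere: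
  fixes a z :: "'a::real_normed_vector"
  assumes "z \<noteq> a" "0 \<le> \<rho>"
  obtains w where "w \<in> sphere a \<rho>" "dist z w = \<bar>dist a z - \<rho>\<bar>"
proof
  let ?n = "dist a z"
  have n: "?n > 0" using assms(1) by simp
  define w where "w = a + (\<rho> / ?n) *\<^sub>R (z - a)"
  show "w \<in> sphere a \<rho>"
    unfolding w_def using n assms(2) by (simp add: dist_norm norm_minus_commute)
  have "z - w = (1 - \<rho> / ?n) *\<^sub>R (z - a)"
    unfolding w_def by (simp add: algebra_simps)
  then have "dist z w = \<bar>(1 - \<rho> / ?n) * ?n\<bar>"
    using n by (simp add: dist_norm norm_minus_commute abs_mult)
  also have "(1 - \<rho> / ?n) * ?n = ?n - \<rho>"
    using n by (simp add: field_simps)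
  finally show "dist z w = \<bar>?n - \<rho>\<bar>" .
qed

locale doubling =
  fixes \<mu> :: "'a::euclidean_space measure" and D :: real
  assumes sets_eq_borel: "sets \<mu> = sets borel"
    and emeasure_ball_less_top: "\<And>a s. 0 < s \<Longrightarrow> emeasure \<mu> (ball a s) < \<infinity>"
    and emeasure_ball_pos: "\<And>a s. 0 < s \<Longrightarrow> 0 < emeasure \<mu> (ball a s)"
    and doubling_const_ge_1: "1 \<le> D"
    and emeasure_ball_double_le: "\<And>a s. 0 < s \<Longrightarrow> emeasure \<mu> (ball a (2 * s)) \<le> ennreal D * emeasure \<mu> (ball a s)"
begin

lemma sets_borel_in_sets [simp]: "S \<in> sets borel \<Longrightarrow> S \<in> sets \<mu>"
  by (simp add: sets_eq_borel)

lemma fmeasurable_if_subset_ball: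
  assumes "S \<subseteq> ball a s" "S \<in> sets borel"
  shows "S \<in> fmeasurable \<mu>"
proof (cases "0 < s")
  case True
  have "emeasure \<mu> S \<le> emeasure \<mu> (ball a s)"
    using assms(1) by (intro emeasure_mono) auto
  then have "emeasure \<mu> S < \<infinity>"
    using emeasure_ball_less_top[OF True] by (rule le_less_trans)
  then show ?thesis
    using assms by (intro fmeasurableI) auto
next
  case False
  then show ?thesis
    using assms by (auto simp: ball_empty)
qed

lemma emeasure_less_top_if_subset_ball:
  "S \<subseteq> ball a s \<Longrightarrow> S \<in> sets borel \<Longrightarrow> emeasure \<mu> S < \<infinity>"
  using fmeasurable_if_subset_ball by (auto simp: fmeasurable_def)

lemma emeasure_eq_measure_if_subset_ball:
  "S \<subseteq> ball a s \<Longrightarrow> S \<in> sets borel \<Longrightarrow> emeasure \<mu> S = measure \<mu> S"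
  using fmeasurable_if_subset_ball by (simp add: emeasure_eq_measure2)

lemma measure_ball_pos: "0 < s \<Longrightarrow> 0 < measure \<mu> (ball a s)"
  using emeasure_ball_pos[of s a] emeasure_eq_measure_if_subset_ball[of "ball a s" a s] by simp

lemma measure_ball_double_le:
  assumes "0 < s"
  shows "measure \<mu> (ball a (2 * s)) \<le> D * measure \<mu> (ball a s)"
proof -
  have "ennreal (measure \<mu> (ball a (2 * s))) \<le> ennreal D * ennreal (measure \<mu> (ball a s))"
    using emeasure_ball_double_le[OF assms, of a]
      emeasure_eq_measure_if_subset_ball[of "ball a (2 * s)" a "2 * s"]
      emeasure_eq_measure_if_subset_ball[of "ball a s" a s]
    by simp
  then show ?thesis
    using doubling_const_ge_1 by (simp add: ennreal_mult[symmetric] ennreal_le_iff)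
qed

lemma emeasure_ball_eight_le:
  assumes "0 < s"
  shows "emeasure \<mu> (ball a (8 * s)) \<le> ennreal (D ^ 3) * emeasure \<mu> (ball a s)"
proof -
  have "emeasure \<mu> (ball a (8 * s)) = emeasure \<mu> (ball a (2 * (2 * (2 * s))))"
    by simp
  also have "\<dots> \<le> ennreal D * emeasure \<mu> (ball a (2 * (2 * s)))"
    using assms by (intro emeasure_ball_double_le) simp
  also have "\<dots> \<le> ennreal D * (ennreal D * emeasure \<mu> (ball a (2 * s)))"
    using assms by (intro mult_left_mono emeasure_ball_double_le) auto
  also have "\<dots> \<le> ennreal D * (ennreal D * (ennreal D * emeasure \<mu> (ball a s)))"
    using assms by (intro mult_left_mono emeasure_ball_double_le) auto
  also have "\<dots> = ennreal (D ^ 3) * emeasure \<mu> (ball a s)"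
    using doubling_const_ge_1 by (simp add: ennreal_mult' power3_eq_cube mult.assoc)
  finally show ?thesis .
qed

lemma measure_strip_le_inner_strip:
  assumes t: "0 < t" "2 * t \<le> R"
  shows "measure \<mu> (ball a R - ball a (R - t)) \<le> D ^ 3 * measure \<mu> (ball a (R - t) - ball a (R - 2 * t))"
proof -
  define \<rho> where "\<rho> = R - 3/2 * t"
  have "0 < \<rho>" using t unfolding \<rho>_def by simp
  have "sphere a \<rho> \<subseteq> (\<Union>i\<in>sphere a \<rho>. ball (id i) (t/2))"
    using t by auto
  then obtain C where C: "countable C" "C \<subseteq> sphere a \<rho>"
     "pairwise (\<lambda>i j. disjnt (ball (id i) (t/2)) (ball (id j) (t/2))) C"
     "sphere a \<rho> \<subseteq> (\<Union>i\<in>C. ball (id i) (5 * (t/2)))"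
    using t by (elim Vitali_covering_lemma_balls[where r = "\<lambda>_. t/2" and B = "t/2"]) auto
  have cover: "ball a R - ball a (R - t) \<subseteq> (\<Union>i\<in>C. ball i (4 * t))"
  proof
    fix z assume z: "z \<in> ball a R - ball a (R - t)"
    then have "z \<noteq> a" using t by auto
    obtain w where w: "w \<in> sphere a \<rho>" "dist z w = \<bar>dist a z - \<rho>\<bar>"
      by (rule radial_projection_to_sphere[OF \<open>z \<noteq> a\<close> less_imp_le[OF \<open>0 < \<rho>\<close>]])
    then obtain i where i: "i \<in> C" "dist i w < 5 * (t/2)"
      using C(4) by (auto simp: dist_commute)
    have "dist z w < 3/2 * t"
      using w(2) z t unfolding \<rho>_def by auto
    then have "dist i z < 4 * t"
      using i(2) dist_triangle[of i z w] by (simp add: dist_commute)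
    with i(1) show "z \<in> (\<Union>i\<in>C. ball i (4 * t))" by auto
  qed
  have packing: "(\<Union>i\<in>C. ball i (t/2)) \<subseteq> ball a (R - t) - ball a (R - 2 * t)"
  proof
    fix z assume "z \<in> (\<Union>i\<in>C. ball i (t/2))"
    then obtain i where i: "i \<in> C" "dist i z < t/2" by auto
    have "dist a i = \<rho>" using i C(2) by auto
    then show "z \<in> ball a (R - t) - ball a (R - 2 * t)"
      using dist_triangle[of a z i] dist_triangle[of a i z] i
      unfolding \<rho>_def by (auto simp: dist_commute)
  qed
  have disjoint: "disjoint_family_on (\<lambda>i. ball i (t/2)) C"
    using C(3) unfolding disjoint_family_on_def pairwise_def disjnt_def by auto
  have "emeasure \<mu> (ball a R - ball a (R - t)) \<le> emeasure \<mu> (\<Union>i\<in>C. ball i (4 * t))"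
    using cover C(1) by (intro emeasure_mono sets.countable_UN') auto
  also have "\<dots> \<le> (\<integral>\<^sup>+i. emeasure \<mu> (ball i (8 * (t/2))) \<partial>count_space C)"
    using C(1) by (simp add: emeasure_UN_countable_le)
  also have "\<dots> \<le> (\<integral>\<^sup>+i. ennreal (D ^ 3) * emeasure \<mu> (ball i (t/2)) \<partial>count_space C)"
    using t by (intro nn_integral_mono emeasure_ball_eight_le) simp
  also have "\<dots> = ennreal (D ^ 3) * emeasure \<mu> (\<Union>i\<in>C. ball i (t/2))"
    using C(1) disjoint by (simp add: nn_integral_cmult emeasure_UN_countable)
  also have "\<dots> \<le> ennreal (D ^ 3) * emeasure \<mu> (ball a (R - t) - ball a (R - 2 * t))"
    using packing by (intro mult_left_mono emeasure_mono) auto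
  also have "emeasure \<mu> (ball a (R - t) - ball a (R - 2 * t))
      = measure \<mu> (ball a (R - t) - ball a (R - 2 * t))"
    using t by (intro emeasure_eq_measure_if_subset_ball[of _ a R]) auto
  finally show ?thesis
    using doubling_const_ge_1 emeasure_eq_measure_if_subset_ball[of "ball a R - ball a (R - t)" a R]
    by (simp add: ennreal_mult[symmetric] ennreal_le_iff)
qed

definition annulus_decay :: real where
  "annulus_decay = D ^ 3 / (D ^ 3 + 1)"

definition holder_exponent :: real where
  "holder_exponent = log 2 (1 / annulus_decay)"

lemma annulus_decay_bounds: "0 < annulus_decay" "annulus_decay < 1" "1/2 \<le> annulus_decay"
proof -
  have "1 \<le> D ^ 3" "0 < D" using doubling_const_ge_1 by simp_all
  then show "0 < annulus_decay" "annulus_decay < 1" "1/2 \<le> annulus_decay"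
    unfolding annulus_decay_def by (simp_all add: field_simps)
qed

lemma holder_exponent_bounds: "0 < holder_exponent" "holder_exponent \<le> 1"
  and two_powr_neg_holder_exponent: "2 powr (- holder_exponent) = annulus_decay"
proof -
  show "0 < holder_exponent"
    using annulus_decay_bounds unfolding holder_exponent_def by simp
  have "1 / annulus_decay \<le> 2"
    using annulus_decay_bounds by (simp add: field_simps)
  then show "holder_exponent \<le> 1"
    using annulus_decay_bounds unfolding holder_exponent_def by (simp add: log_le_one_cancel_iff)
  show "2 powr (- holder_exponent) = annulus_decay"
    using annulus_decay_bounds unfolding holder_exponent_def by (simp add: powr_minus)
qed

lemma measure_strip_le_decay:
  assumes t: "0 < t" "2 * t \<le> R"
  shows "measure \<mu> (ball a R - ball a (R - t)) \<le> annulus_decay * measure \<mu> (ball a R - ball a (R - 2 * t))"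
proof -
  let ?outer = "ball a R - ball a (R - t)" and ?inner = "ball a (R - t) - ball a (R - 2 * t)"
  have strips: "ball a R - ball a (R - 2 * t) = ?outer \<union> ?inner" "?outer \<subseteq> ball a R" "?inner \<subseteq> ball a R"
    using t by auto
  then have "measure \<mu> (ball a R - ball a (R - 2 * t)) = measure \<mu> ?outer + measure \<mu> ?inner"
    unfolding strips(1)
    using emeasure_less_top_if_subset_ball[of ?outer a R] emeasure_less_top_if_subset_ball[of ?inner a R]
    by (intro measure_Union) auto
  moreover have "measure \<mu> ?outer \<le> D ^ 3 * measure \<mu> ?inner"
    using t by (rule measure_strip_le_inner_strip)
  moreover have "1 \<le> D ^ 3"
    using doubling_const_ge_1 by simp
  ultimately show ?thesis
    unfolding annulus_decay_def by (simp add: field_simps)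
qed

lemma measure_strip_le_decay_power:
  assumes "0 < R" "0 < t" "t \<le> R / 2 ^ k"
  shows "measure \<mu> (ball a R - ball a (R - t)) \<le> annulus_decay ^ k * measure \<mu> (ball a R)"
  using assms(2,3)
proof (induction k arbitrary: t)
  case 0
  then show ?case
    using fmeasurable_if_subset_ball[of "ball a R" a R] by (simp add: measure_mono_fmeasurable)
next
  case (Suc k)
  have "2 * t \<le> R / 2 ^ k"
    using Suc.prems by (simp add: field_simps)
  moreover have "R / 2 ^ k \<le> R"
    using assms(1) by (simp add: field_simps)
  ultimately have "measure \<mu> (ball a R - ball a (R - t)) \<le> annulus_decay * measure \<mu> (ball a R - ball a (R - 2 * t))"
    using Suc.prems by (intro measure_strip_le_decay) auto
  also have "\<dots> \<le> annulus_decay * (annulus_decay ^ k * measure \<mu> (ball a R))"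
    using Suc.IH[of "2 * t"] Suc.prems \<open>2 * t \<le> R / 2 ^ k\<close> annulus_decay_bounds
    by (intro mult_left_mono) auto
  finally show ?case by simp
qed

lemma measure_strip_le_powr:
  assumes "0 \<le> t" "t \<le> R"
  shows "measure \<mu> (ball a R - ball a (R - t)) \<le> 2 * (t / R) powr holder_exponent * measure \<mu> (ball a R)"
proof (cases "t = 0")
  case True
  then show ?thesis by simp
next
  case False
  then have t: "0 < t" "0 < R" using assms by auto
  define k where "k = nat \<lfloor>log 2 (R / t)\<rfloor>"
  have "0 \<le> log 2 (R / t)" using t assms by simp
  then have k: "real k \<le> log 2 (R / t)" "log 2 (R / t) < real k + 1"
    unfolding k_def by linarith+
  have "2 powr real k \<le> R / t"
    using k(1) t by (simp add: le_log_iff)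
  then have "t \<le> R / 2 ^ k"
    using t by (simp add: powr_realpow field_simps)
  then have "measure \<mu> (ball a R - ball a (R - t)) \<le> annulus_decay ^ k * measure \<mu> (ball a R)"
    using t by (intro measure_strip_le_decay_power)
  also have "annulus_decay ^ k \<le> 2 * (t / R) powr holder_exponent"
  proof -
    have "R / t < 2 powr (real k + 1)"
      using k(2) t by (simp add: log_less_iff)
    then have "1 / 2 powr (real k + 1) < 1 / (R / t)"
      using t by (intro divide_strict_left_mono) auto
    then have "2 powr (- (real k + 1)) \<le> t / R"
      using powr_minus_divide[of 2 "real k + 1"] by (simp only: divide_divide_eq_right)
    then have "(2 powr (- (real k + 1))) powr holder_exponent \<le> (t / R) powr holder_exponent"
      using holder_exponent_bounds by (intro powr_mono2) auto
    moreover have "(2 powr (- (real k + 1))) powr holder_exponent = annulus_decay ^ k * annulus_decay"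
      using annulus_decay_bounds
      by (simp add: powr_powr two_powr_neg_holder_exponent[symmetric] powr_realpow[symmetric]
          powr_add[symmetric] algebra_simps)
    moreover have "annulus_decay ^ k \<le> annulus_decay ^ k * (2 * annulus_decay)"
      using annulus_decay_bounds by (simp add: mult_le_cancel_left1)
    ultimately show ?thesis by (simp add: algebra_simps)
  qed
  finally show ?thesis
    using t by (simp add: mult_right_mono)
qed

lemma measure_sym_diff_balls_le:
  assumes r: "0 < rx" "\<bar>rx - ry\<bar> \<le> dist x y" "dist x y < rx / 4"
  shows "measure \<mu> (sym_diff (ball x rx) (ball y ry))
    \<le> (4 + 8 * D) * (dist x y / rx) powr holder_exponent * measure \<mu> (ball x rx)"
proof -
  define h where "h = dist x y"
  define q where "q = (h / rx) powr holder_exponent"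
  let ?Ax = "ball x rx - ball x (rx - 2 * h)" and ?Ay = "ball y ry - ball y (ry - 2 * h)"
  have h: "0 \<le> h" "h < rx / 4" and ry: "rx / 2 < ry" "ry < 2 * rx"
    using r unfolding h_def by auto
  have "ball y ry \<subseteq> ball x (2 * rx)"
  proof
    fix z assume "z \<in> ball y ry"
    then show "z \<in> ball x (2 * rx)"
      using r dist_triangle[of x z y] by auto
  qed
  then have within: "ball x rx \<subseteq> ball x (2 * rx)" "?Ax \<subseteq> ball x (2 * rx)" "?Ay \<subseteq> ball x (2 * rx)"
    and By_within: "ball y ry \<subseteq> ball x (2 * rx)"
    using r by auto
  have "measure \<mu> (sym_diff (ball x rx) (ball y ry)) \<le> measure \<mu> (?Ax \<union> ?Ay)"
    using sym_diff_balls_subset_strips[OF r(2)] within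
    by (intro measure_mono_fmeasurable fmeasurable_if_subset_ball[of _ x "2 * rx"]) (auto simp: h_def)
  also have "\<dots> \<le> measure \<mu> ?Ax + measure \<mu> ?Ay"
    by (intro measure_Un_le) auto
  also have "measure \<mu> ?Ax \<le> 2 * (2 * h / rx) powr holder_exponent * measure \<mu> (ball x rx)"
    using h by (intro measure_strip_le_powr) auto
  also have "\<dots> \<le> 2 * (2 * q) * measure \<mu> (ball x rx)"
    using h r holder_exponent_bounds measure_ball_pos[of rx x]
      powr_mult_le_mult_powr[of 2 "h / rx" holder_exponent]
    unfolding q_def by (intro mult_right_mono mult_left_mono) simp_all
  also have "measure \<mu> ?Ay \<le> 2 * (2 * h / ry) powr holder_exponent * measure \<mu> (ball y ry)"
    using h ry by (intro measure_strip_le_powr) auto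
  also have "\<dots> \<le> 2 * (4 * q) * (D * measure \<mu> (ball x rx))"
  proof (intro mult_mono mult_left_mono)
    have "h * rx \<le> h * (2 * ry)"
      using h ry by (intro mult_left_mono) auto
    then have "2 * h / ry \<le> 4 * (h / rx)"
      using r ry by (simp add: field_simps)
    then have "(2 * h / ry) powr holder_exponent \<le> (4 * (h / rx)) powr holder_exponent"
      using h ry holder_exponent_bounds by (intro powr_mono2) auto
    also have "\<dots> \<le> 4 * q"
      unfolding q_def using h r holder_exponent_bounds by (intro powr_mult_le_mult_powr) auto
    finally show "(2 * h / ry) powr holder_exponent \<le> 4 * q" .
    have "measure \<mu> (ball y ry) \<le> measure \<mu> (ball x (2 * rx))"
      using By_within by (intro measure_mono_fmeasurable fmeasurable_if_subset_ball[of _ x "2 * rx"]) auto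
    also have "\<dots> \<le> D * measure \<mu> (ball x rx)"
      using r by (intro measure_ball_double_le)
    finally show "measure \<mu> (ball y ry) \<le> D * measure \<mu> (ball x rx)" .
  qed (use doubling_const_ge_1 measure_ball_pos[of rx x] r in \<open>auto simp: q_def\<close>)
  finally show ?thesis
    unfolding h_def[symmetric] q_def[symmetric] by (simp add: algebra_simps)
qed

lemma abs_avg_op_diff_le:
  fixes v :: "'a \<Rightarrow> real"
  assumes v: "v \<in> borel_measurable \<mu>" "AE z in \<mu>. \<bar>v z\<bar> \<le> M" "0 \<le> M"
    and r: "0 < r x" "0 < r y" "\<bar>r x - r y\<bar> \<le> dist x y"
  shows "\<bar>avg_op \<mu> r v x - avg_op \<mu> r v y\<bar>
    \<le> (8 + 16 * D) * M * (dist x y / r x) powr holder_exponent"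
proof -
  define q where "q = (dist x y / r x) powr holder_exponent"
  define I where "I z = (LINT w:ball z (r z)|\<mu>. v w)" for z
  define m where "m z = measure \<mu> (ball z (r z))" for z
  have avg: "avg_op \<mu> r v z = I z / m z" for z
    unfolding avg_op_def I_def m_def ..
  have finite_ball: "ball z s \<in> sets \<mu>" "emeasure \<mu> (ball z s) < \<infinity>" for z s
    using emeasure_less_top_if_subset_ball[of "ball z s" z s] by auto
  have m: "0 < m x" "0 < m y"
    unfolding m_def using r measure_ball_pos by auto
  have I: "\<bar>I z\<bar> \<le> M * m z" for z
    unfolding I_def m_def using v finite_ball by (rule abs_set_integral_le)
  have "0 \<le> q" unfolding q_def by simp
  show ?thesis
  proof (cases "r x / 4 \<le> dist x y")
    case True
    have "(1/4::real) powr 1 \<le> (1/4) powr holder_exponent"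
      using holder_exponent_bounds by (intro powr_mono') auto
    also have "\<dots> \<le> q"
      unfolding q_def using True r holder_exponent_bounds by (intro powr_mono2) (auto simp: field_simps)
    finally have "1/4 \<le> q" by simp
    have "\<bar>I x / m x - I y / m y\<bar> \<le> M + M"
      using I[of x] I[of y] m by (intro abs_triangle_ineq4[THEN order_trans] add_mono)
        (auto simp: abs_divide field_simps)
    also have "\<dots> \<le> 8 * M * q"
      using \<open>1/4 \<le> q\<close> v(3) by (simp add: mult_left_mono[of "1/4" q "8 * M", simplified])
    also have "\<dots> \<le> (8 + 16 * D) * M * q"
      using doubling_const_ge_1 v(3) \<open>0 \<le> q\<close> by (intro mult_right_mono) auto
    finally show ?thesis unfolding avg q_def .
  next
    case False
    define \<delta> where "\<delta> = measure \<mu> (sym_diff (ball x (r x)) (ball y (r y)))"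
    have "\<bar>I x - I y\<bar> \<le> M * \<delta>"
      unfolding I_def \<delta>_def by (rule abs_set_integral_diff_le[OF v finite_ball finite_ball])
    moreover have "\<bar>m x - m y\<bar> \<le> \<delta>"
      unfolding m_def \<delta>_def
      by (intro abs_measure_diff_le_measure_sym_diff fmeasurableI finite_ball)
    ultimately have "\<bar>I x / m x - I y / m y\<bar> \<le> 2 * M * \<delta> / m x"
      using m I[of y] v(3) by (intro abs_div_diff_le)
    also have "\<delta> \<le> (4 + 8 * D) * q * m x"
      unfolding \<delta>_def q_def m_def using r False by (intro measure_sym_diff_balls_le) auto
    then have "2 * M * \<delta> / m x \<le> 2 * M * ((4 + 8 * D) * q * m x) / m x"
      using v(3) m by (intro divide_right_mono mult_left_mono) auto
    also have "\<dots> = (8 + 16 * D) * M * q"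
      using m by (simp add: field_simps)
    finally show ?thesis unfolding avg q_def .
  qed
qed

lemma abs_avg_op_diff_le_Linf_norm:
  assumes \<Omega>: "open \<Omega>" "admissible_radius \<Omega> r" "Linf_on \<mu> \<Omega> u"
    and xy: "x \<in> \<Omega>" "y \<in> \<Omega>" "\<bar>r x - r y\<bar> \<le> dist x y"
  shows "\<bar>avg_op \<mu> r u x - avg_op \<mu> r u y\<bar>
    \<le> (8 + 16 * D) * Linf_norm \<mu> \<Omega> u * (dist x y / r x) powr holder_exponent"
proof -
  define v where "v z = indicator \<Omega> z *\<^sub>R u z" for z
  have "space \<mu> = UNIV"
    using sets_eq_imp_space_eq[OF sets_eq_borel] by simp
  then have \<Omega>_sets: "\<Omega> \<inter> space \<mu> \<in> sets \<mu>"
    using \<Omega>(1) by simp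
  have v: "v \<in> borel_measurable \<mu>"
    using \<Omega>(3) borel_measurable_restrict_space_iff[OF \<Omega>_sets]
    unfolding Linf_on_def v_def by blast
  have v_bounded: "AE z in \<mu>. \<bar>v z\<bar> \<le> Linf_norm \<mu> \<Omega> u"
    using AE_abs_le_Linf_norm[OF \<Omega>(3) \<Omega>_sets]
    by eventually_elim (use Linf_norm_nonneg[of \<mu> \<Omega> u] in \<open>auto simp: v_def indicator_def\<close>)
  have avg_eq: "avg_op \<mu> r u z = avg_op \<mu> r v z" if "z \<in> \<Omega>" for z
  proof -
    have "(LINT w:ball z (r z)|\<mu>. u w) = (LINT w:ball z (r z)|\<mu>. v w)"
      using ball_subset_if_admissible_radius[OF \<Omega>(2) that]
      by (intro set_lebesgue_integral_cong) (auto simp: v_def)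
    then show ?thesis
      unfolding avg_op_def by simp
  qed
  have "0 < r x" "0 < r y"
    using \<Omega>(2) xy unfolding admissible_radius_def by auto
  from abs_avg_op_diff_le[OF v v_bounded Linf_norm_nonneg this xy(3)]
  show ?thesis
    using avg_eq xy by simp
qed

end

theorem lemma2p3:
  fixes \<mu> :: "'a::euclidean_space measure"
  assumes "doubling_measure \<mu>"
  shows "\<exists>C \<theta>::real. C > 0 \<and> 0 < \<theta> \<and> \<theta> \<le> 1 \<and>
    (\<forall>(\<Omega>::'a set) (r::'a \<Rightarrow> real) (u::'a \<Rightarrow> real).
       domain \<Omega> \<longrightarrow> admissible_radius \<Omega> r \<longrightarrow>
       (\<forall>x\<in>\<Omega>. \<forall>y\<in>\<Omega>. \<bar>r x - r y\<bar> \<le> dist x y) \<longrightarrow>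
       Linf_on \<mu> \<Omega> u \<longrightarrow>
       (\<forall>x\<in>\<Omega>. \<forall>y\<in>\<Omega>.
          \<bar>avg_op \<mu> r u x - avg_op \<mu> r u y\<bar> \<le> C * Linf_norm \<mu> \<Omega> u * (dist x y / r x) powr \<theta>))"
proof -
  obtain D where "doubling \<mu> D"
    using assms unfolding doubling_measure_def doubling_def by blast
  then interpret doubling \<mu> D .
  show ?thesis
  proof (rule exI[of _ "8 + 16 * D"], rule exI[of _ holder_exponent],
      intro conjI holder_exponent_bounds allI impI ballI)
    show "0 < 8 + 16 * D"
      using doubling_const_ge_1 by simp
    fix \<Omega> r u x y
    assume "domain \<Omega>" "admissible_radius \<Omega> r" "\<forall>x\<in>\<Omega>. \<forall>y\<in>\<Omega>. \<bar>r x - r y\<bar> \<le> dist x y"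
      "Linf_on \<mu> \<Omega> u" "x \<in> \<Omega>" "y \<in> \<Omega>"
    then show "\<bar>avg_op \<mu> r u x - avg_op \<mu> r u y\<bar>
      \<le> (8 + 16 * D) * Linf_norm \<mu> \<Omega> u * (dist x y / r x) powr holder_exponent"
      by (intro abs_avg_op_diff_le_Linf_norm) (auto simp: domain_def)
  qed
qed

end
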